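(* If $\mathcal{F}$ is a uniformly Lipschitz collection of maps between metric spaces (i.e. $\sup_{F\in\mathcal{F}}\mathrm{Lip}(F)<\infty$), then $\lim_n a_n(\mathcal{F})$ exists and equals $\inf_n a_n(\mathcal{F})$.
   Context: Convention $\frac00=0$. $\mathrm{Lip}(g)=\sup_{x,y}d_V(g(x),g(y))/d_U(x,y)$. $2^n=\{\pm1\}^n$ carries the normalized Hamming metric $\partial(\varepsilon,\delta)=\frac1n|\{i:\varepsilon(i)\ne\delta(i)\}|$ and the uniform probability measure (expectation $\mathbb{E}$). $a_n(\mathcal{F})$ is the infimum of those $a>0$ such that for every $F:X\to Y$ in $\mathcal{F}$ and every $f:2^n\to X$, $\mathbb{E}\,d_Y(F\circ f(\varepsilon),F\circ f(-\varepsilon))\le a\,\mathrm{Lip}(f:2^n\to X)$. *)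

theory Defs
  imports "HOL-Analysis.Analysis"
begin

text \<open>The discrete cube 2^n = {+-1}^n, encoded as boolean lists of length n
  (True = +1, False = -1).\<close>
definition cube :: "nat \<Rightarrow> bool list set" where
  "cube n = {xs. length xs = n}"

text \<open>Normalized Hamming metric (with 0/0 = 0, automatic in Isabelle).\<close>
definition ham :: "nat \<Rightarrow> bool list \<Rightarrow> bool list \<Rightarrow> real" where
  "ham n e d = real (card {i. i < n \<and> e ! i \<noteq> d ! i}) / real n"

definition negc :: "bool list \<Rightarrow> bool list" where
  "negc e = map Not e"

definition cexp :: "nat \<Rightarrow> (bool list \<Rightarrow> real) \<Rightarrow> real" where
  "cexp n h = (\<Sum>e\<in>cube n. h e) / 2 ^ n"

text \<open>Lipschitz constant of g : (U,dU) -> (V,dV), as an extended real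
  (sup over pairs, with 0/0 = 0).\<close>
definition lip :: "'a set \<Rightarrow> ('a \<Rightarrow> 'a \<Rightarrow> real) \<Rightarrow> ('b \<Rightarrow> 'b \<Rightarrow> real) \<Rightarrow> ('a \<Rightarrow> 'b) \<Rightarrow> ereal" where
  "lip U dU dV g = Sup (insert 0 ((\<lambda>(x,y). ereal (dV (g x) (g y) / dU x y)) ` (U \<times> U)))"

definition an :: "nat \<Rightarrow> ('a metric \<times> 'b metric \<times> ('a \<Rightarrow> 'b)) set \<Rightarrow> real" where
  "an n FF = Inf {a. a > 0 \<and>
     (\<forall>(X, Y, F) \<in> FF. \<forall>f. f ` cube n \<subseteq> mspace X \<longrightarrow>
        ereal (cexp n (\<lambda>e. mdist Y (F (f e)) (F (f (negc e)))))
          \<le> ereal a * lip (cube n) (ham n) (mdist X) f)}"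

end

(* For x in 2^N and d in 2^n, the point i \<mapsto> x_i d_(i mod n) of 2^N depends on d with
   Lipschitz constant at most 1 + n/N, since every coordinate of d is repeated at most
   N div n + 1 times, and it commutes with the antipodal map.  Applying the defining
   inequality of a_n to d \<mapsto> f(x d) and averaging over x (for fixed d, x \<mapsto> x d is a
   bijection of 2^N) gives a_N \<le> (1 + n/N) a_n.  Hence limsup a_N \<le> a_n for every n \<ge> 1,
   and the sequence converges to its infimum.  The uniform Lipschitz bound only serves to
   make every a_n the infimum of a nonempty set. *)

theory Submission
  imports Defs
begin

lemma finite_cube: "finite (cube n)"
  and card_cube: "card (cube n) = 2 ^ n"
proof -
  have cube_eq: "cube n = {xs. set xs \<subseteq> UNIV \<and> length xs = n}"
    by (auto simp: cube_def)
  show "finite (cube n)"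
    unfolding cube_eq by (rule finite_lists_length_eq) simp
  show "card (cube n) = 2 ^ n"
    unfolding cube_eq by (subst card_lists_length_eq) auto
qed

lemma negc_in_cube: "e \<in> cube n \<Longrightarrow> negc e \<in> cube n"
  by (simp add: cube_def negc_def)

lemma cexp_mono: "(\<And>e. e \<in> cube n \<Longrightarrow> g e \<le> h e) \<Longrightarrow> cexp n g \<le> cexp n h"
  unfolding cexp_def by (intro divide_right_mono sum_mono) auto

lemma cexp_const [simp]: "cexp n (\<lambda>_. c) = c"
  by (simp add: cexp_def card_cube)

lemma ham_nonneg: "0 \<le> ham n e d"
  by (simp add: ham_def)

lemma ham_eq_0_iff:
  assumes "e \<in> cube n" "d \<in> cube n"
  shows "ham n e d = 0 \<longleftrightarrow> e = d"
proof -
  have "ham n e d = 0 \<longleftrightarrow> n = 0 \<or> {i. i < n \<and> e ! i \<noteq> d ! i} = {}"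
    by (auto simp: ham_def)
  also have "\<dots> \<longleftrightarrow> e = d"
    using assms by (auto simp: cube_def intro!: nth_equalityI)
  finally show ?thesis .
qed

lemma ham_negc:
  assumes "0 < n" "e \<in> cube n"
  shows "ham n e (negc e) = 1"
proof -
  have "{i. i < n \<and> e ! i \<noteq> negc e ! i} = {..<n}"
    using assms by (auto simp: negc_def cube_def)
  then show ?thesis
    using assms by (simp add: ham_def)
qed

lemma ratio_le_lip: "x \<in> U \<Longrightarrow> y \<in> U \<Longrightarrow> ereal (dV (g x) (g y) / dU x y) \<le> lip U dU dV g"
  unfolding lip_def by (rule Sup_upper) auto

lemma lip_nonneg: "0 \<le> lip U dU dV g"
  unfolding lip_def by (rule Sup_upper) auto

definition lip_real :: "'a set \<Rightarrow> ('a \<Rightarrow> 'a \<Rightarrow> real) \<Rightarrow> ('b \<Rightarrow> 'b \<Rightarrow> real) \<Rightarrow> ('a \<Rightarrow> 'b) \<Rightarrow> real"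
  where "lip_real U dU dV g = Max (insert 0 ((\<lambda>(x, y). dV (g x) (g y) / dU x y) ` (U \<times> U)))"

lemma lip_eq_lip_real:
  assumes "finite U"
  shows "lip U dU dV g = ereal (lip_real U dU dV g)"
proof (rule antisym)
  show "lip U dU dV g \<le> ereal (lip_real U dU dV g)"
    unfolding lip_def lip_real_def using assms by (auto intro!: Sup_least Max_ge)
  have "lip_real U dU dV g \<in> insert 0 ((\<lambda>(x, y). dV (g x) (g y) / dU x y) ` (U \<times> U))"
    unfolding lip_real_def using assms by (intro Max_in) auto
  then show "ereal (lip_real U dU dV g) \<le> lip U dU dV g"
    using lip_nonneg[of U dU dV g] by (auto simp: zero_ereal_def intro: ratio_le_lip)
qed

lemma lip_real_nonneg: "finite U \<Longrightarrow> 0 \<le> lip_real U dU dV g"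
  unfolding lip_real_def by (intro Max_ge) auto

lemma dist_le_lip_real_mult:
  assumes "finite U" "x \<in> U" "y \<in> U" "0 \<le> dU x y"
    and "dU x y = 0 \<Longrightarrow> dV (g x) (g y) = 0"
  shows "dV (g x) (g y) \<le> lip_real U dU dV g * dU x y"
proof (cases "dU x y = 0")
  case False
  have "dV (g x) (g y) / dU x y \<le> lip_real U dU dV g"
    unfolding lip_real_def using assms by (intro Max_ge) auto
  with False assms(4) show ?thesis
    by (simp add: divide_le_eq)
qed (use assms in simp)

lemma lip_real_le:
  assumes "finite U" "0 \<le> r"
    and "\<And>x y. x \<in> U \<Longrightarrow> y \<in> U \<Longrightarrow> 0 \<le> dU x y \<and> dV (g x) (g y) \<le> r * dU x y"
  shows "lip_real U dU dV g \<le> r"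
  unfolding lip_real_def
proof (intro Max.boundedI)
  have "dV (g x) (g y) / dU x y \<le> r" if "x \<in> U" "y \<in> U" for x y
  proof (cases "dU x y = 0")
    case False
    with assms(3)[OF that] show ?thesis
      by (simp add: pos_divide_le_eq)
  qed (use assms in simp)
  then show "t \<le> r" if "t \<in> insert 0 ((\<lambda>(x, y). dV (g x) (g y) / dU x y) ` (U \<times> U))" for t
    using that assms(2) by auto
qed (use assms in auto)

lemma mdist_le_lip_real_ham:
  assumes "f ` cube n \<subseteq> mspace X" "u \<in> cube n" "v \<in> cube n"
  shows "mdist X (f u) (f v) \<le> lip_real (cube n) (ham n) (mdist X) f * ham n u v"
  using assms
  by (intro dist_le_lip_real_mult finite_cube ham_nonneg) (auto simp: ham_eq_0_iff)

lemma mdist_le_of_lip_le: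
  assumes "lip (mspace X) (mdist X) (mdist Y) F \<le> ereal L" "F ` mspace X \<subseteq> mspace Y"
    and "u \<in> mspace X" "v \<in> mspace X"
  shows "mdist Y (F u) (F v) \<le> L * mdist X u v"
proof (cases "u = v")
  case False
  then have "0 < mdist X u v"
    using assms mdist_nonneg[of X u v] mdist_zero[of u X v] by linarith
  moreover have "ereal (mdist Y (F u) (F v) / mdist X u v) \<le> ereal L"
    using assms by (blast intro: order_trans[OF ratio_le_lip])
  ultimately show ?thesis
    by (simp add: divide_le_eq)
next
  case True
  then have "mdist Y (F u) (F v) = 0" "mdist X u v = 0"
    using assms by auto
  then show ?thesis
    by simp
qed

definition an_constants :: "nat \<Rightarrow> ('a metric \<times> 'b metric \<times> ('a \<Rightarrow> 'b)) set \<Rightarrow> real set" where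
  "an_constants n FF = {a. 0 < a \<and> (\<forall>(X, Y, F) \<in> FF. \<forall>f. f ` cube n \<subseteq> mspace X \<longrightarrow>
     cexp n (\<lambda>e. mdist Y (F (f e)) (F (f (negc e)))) \<le> a * lip_real (cube n) (ham n) (mdist X) f)}"

lemma an_eq_Inf_an_constants: "an n FF = Inf (an_constants n FF)"
  unfolding an_def an_constants_def lip_eq_lip_real[OF finite_cube] by simp

lemma bdd_below_an_constants: "bdd_below (an_constants n FF)"
  by (rule bdd_belowI[of _ 0]) (simp add: an_constants_def)

lemma an_nonneg: "an_constants n FF \<noteq> {} \<Longrightarrow> 0 \<le> an n FF"
  unfolding an_eq_Inf_an_constants
  by (rule cInf_greatest) (auto simp: an_constants_def)

lemma an_constants_if_lip_le:
  assumes "0 < n" "0 < a" "L \<le> a"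
    and maps: "\<forall>(X, Y, F) \<in> FF. F ` mspace X \<subseteq> mspace Y"
    and lip: "\<forall>(X, Y, F) \<in> FF. lip (mspace X) (mdist X) (mdist Y) F \<le> ereal L"
  shows "a \<in> an_constants n FF"
proof -
  have "cexp n (\<lambda>e. mdist Y (F (f e)) (F (f (negc e)))) \<le> a * lip_real (cube n) (ham n) (mdist X) f"
    if XYF: "(X, Y, F) \<in> FF" and f: "f ` cube n \<subseteq> mspace X" for X Y F f
  proof -
    let ?K = "lip_real (cube n) (ham n) (mdist X) f"
    have "mdist Y (F (f e)) (F (f (negc e))) \<le> a * ?K" if e: "e \<in> cube n" for e
    proof -
      have fe: "f e \<in> mspace X" "f (negc e) \<in> mspace X"
        using f e negc_in_cube by blast+
      have "mdist Y (F (f e)) (F (f (negc e))) \<le> L * mdist X (f e) (f (negc e))"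
        using mdist_le_of_lip_le fe maps lip XYF by fastforce
      also have "\<dots> \<le> a * mdist X (f e) (f (negc e))"
        using \<open>L \<le> a\<close> by (simp add: mult_right_mono)
      also have "\<dots> \<le> a * (?K * ham n e (negc e))"
        using mdist_le_lip_real_ham[OF f e negc_in_cube[OF e]] \<open>0 < a\<close> by simp
      finally show ?thesis
        using ham_negc[OF \<open>0 < n\<close> e] by simp
    qed
    then show ?thesis
      using cexp_mono[of n _ "\<lambda>_. a * ?K"] by simp
  qed
  then show ?thesis
    using \<open>0 < a\<close> by (auto simp: an_constants_def)
qed

text \<open>In the \<open>\<plusminus>1\<close> notation, \<open>tile N n x d\<close> is the point \<open>i \<mapsto> x i \<cdot> d (i mod n)\<close>
  of \<open>2\<^sup>N\<close>: equality of booleans is multiplication of signs.\<close>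

definition tile :: "nat \<Rightarrow> nat \<Rightarrow> bool list \<Rightarrow> bool list \<Rightarrow> bool list" where
  "tile N n x d = map (\<lambda>i. x ! i = d ! (i mod n)) [0..<N]"

lemma tile_in_cube: "tile N n x d \<in> cube N"
  by (simp add: tile_def cube_def)

lemma negc_tile: "0 < n \<Longrightarrow> d \<in> cube n \<Longrightarrow> negc (tile N n x d) = tile N n x (negc d)"
  by (auto simp: tile_def negc_def cube_def)

lemma tile_tile: "x \<in> cube N \<Longrightarrow> tile N n (tile N n x d) d = x"
  by (auto simp: tile_def cube_def intro!: nth_equalityI)

lemma bij_betw_tile: "bij_betw (\<lambda>x. tile N n x d) (cube N) (cube N)"
  by (rule bij_betwI[where g = "\<lambda>x. tile N n x d"]) (auto simp: tile_in_cube tile_tile)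

lemma cexp_tile: "cexp N h = cexp N (\<lambda>x. cexp n (\<lambda>d. h (tile N n x d)))"
proof -
  have "(\<Sum>x\<in>cube N. \<Sum>d\<in>cube n. h (tile N n x d)) = (\<Sum>d\<in>cube n. \<Sum>x\<in>cube N. h (tile N n x d))"
    by (rule sum.swap)
  also have "\<dots> = 2 ^ n * (\<Sum>y\<in>cube N. h y)"
    by (simp add: sum.reindex_bij_betw[OF bij_betw_tile] card_cube)
  finally show ?thesis
    unfolding cexp_def by (simp add: sum_divide_distrib[symmetric])
qed

lemma card_mod_le:
  assumes "0 < n"
  shows "card {i. i < N \<and> P (i mod n)} \<le> card {j. j < n \<and> P j} * (N div n + 1)"
proof -
  let ?J = "{j. j < n \<and> P j} \<times> {..N div n}"
  have "{i. i < N \<and> P (i mod n)} \<subseteq> (\<lambda>(j, q). q * n + j) ` ?J"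
  proof
    fix i assume "i \<in> {i. i < N \<and> P (i mod n)}"
    then have "(i mod n, i div n) \<in> ?J"
      using assms by (auto simp: div_le_mono)
    then show "i \<in> (\<lambda>(j, q). q * n + j) ` ?J"
      by (rule rev_image_eqI) simp
  qed
  moreover have "finite ?J"
    by simp
  ultimately have "card {i. i < N \<and> P (i mod n)} \<le> card ?J"
    by (meson card_image_le card_mono finite_imageI order_trans)
  then show ?thesis
    by (simp add: card_cartesian_product)
qed

lemma ham_tile_le:
  assumes "0 < n" "0 < N"
  shows "ham N (tile N n x d) (tile N n x d') \<le> (1 + n / N) * ham n d d'"
proof -
  let ?D = "card {j. j < n \<and> d ! j \<noteq> d' ! j}"
  let ?C = "card {i. i < N \<and> tile N n x d ! i \<noteq> tile N n x d' ! i}"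
  have "{i. i < N \<and> tile N n x d ! i \<noteq> tile N n x d' ! i} = {i. i < N \<and> d ! (i mod n) \<noteq> d' ! (i mod n)}"
    by (auto simp: tile_def)
  then have "?C \<le> ?D * (N div n + 1)"
    using card_mod_le[OF assms(1), of N "\<lambda>j. d ! j \<noteq> d' ! j"] by (simp only:)
  then have "real ?C \<le> real (?D * (N div n + 1))"
    by (rule of_nat_mono)
  also have "\<dots> \<le> real ?D * (N / n + 1)"
    unfolding of_nat_mult of_nat_add of_nat_1
    by (intro mult_left_mono add_right_mono of_nat_div_le_of_nat) simp
  finally have "ham N (tile N n x d) (tile N n x d') \<le> real ?D * (N / n + 1) / N"
    unfolding ham_def by (rule divide_right_mono) (rule of_nat_0_le_iff)
  also have "\<dots> = (1 + n / N) * ham n d d'"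
    unfolding ham_def using assms by (simp add: field_simps)
  finally show ?thesis .
qed

lemma lip_real_tile_le:
  assumes "0 < n" "0 < N" "f ` cube N \<subseteq> mspace X"
  shows "lip_real (cube n) (ham n) (mdist X) (\<lambda>d. f (tile N n x d))
    \<le> (1 + n / N) * lip_real (cube N) (ham N) (mdist X) f"
proof (rule lip_real_le[OF finite_cube])
  let ?K = "lip_real (cube N) (ham N) (mdist X) f"
  have K: "0 \<le> ?K"
    by (rule lip_real_nonneg[OF finite_cube])
  then show "0 \<le> (1 + n / N) * ?K"
    by simp
  fix d d'
  have "mdist X (f (tile N n x d)) (f (tile N n x d')) \<le> ?K * ham N (tile N n x d) (tile N n x d')"
    using assms(3) by (intro mdist_le_lip_real_ham tile_in_cube)
  also have "\<dots> \<le> ?K * ((1 + n / N) * ham n d d')"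
    using K by (intro mult_left_mono ham_tile_le assms(1,2))
  finally show "0 \<le> ham n d d' \<and>
      mdist X (f (tile N n x d)) (f (tile N n x d')) \<le> (1 + n / N) * ?K * ham n d d'"
    by (simp add: ham_nonneg mult_ac)
qed

lemma an_constants_tile:
  assumes n: "0 < n" "0 < N" and a: "a \<in> an_constants n FF"
  shows "(1 + n / N) * a \<in> an_constants N FF"
proof -
  have "cexp N (\<lambda>e. mdist Y (F (f e)) (F (f (negc e))))
      \<le> (1 + n / N) * a * lip_real (cube N) (ham N) (mdist X) f"
    if XYF: "(X, Y, F) \<in> FF" and f: "f ` cube N \<subseteq> mspace X" for X Y F f
  proof -
    let ?H = "\<lambda>e. mdist Y (F (f e)) (F (f (negc e)))"
    let ?K = "lip_real (cube N) (ham N) (mdist X) f"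
    have "cexp n (\<lambda>d. ?H (tile N n x d)) \<le> a * ((1 + n / N) * ?K)" if "x \<in> cube N" for x
    proof -
      let ?g = "\<lambda>d. f (tile N n x d)"
      have g: "?g ` cube n \<subseteq> mspace X"
        using f tile_in_cube by blast
      have "cexp n (\<lambda>d. ?H (tile N n x d)) = cexp n (\<lambda>d. mdist Y (F (?g d)) (F (?g (negc d))))"
        unfolding cexp_def using n(1)
        by (intro arg_cong2[where f = "(/)"] sum.cong) (simp_all add: negc_tile)
      also have "\<dots> \<le> a * lip_real (cube n) (ham n) (mdist X) ?g"
        using a XYF g unfolding an_constants_def by fastforce
      also have "\<dots> \<le> a * ((1 + n / N) * ?K)"
        using a lip_real_tile_le[OF n f] by (simp add: an_constants_def)
      finally show ?thesis .
    qed
    then have "cexp N (\<lambda>x. cexp n (\<lambda>d. ?H (tile N n x d))) \<le> a * ((1 + n / N) * ?K)"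
      using cexp_mono[of N _ "\<lambda>_. a * ((1 + n / N) * ?K)"] by simp
    then show ?thesis
      by (simp add: cexp_tile[of N ?H n] mult_ac)
  qed
  moreover have "0 < (1 + n / N) * a"
    using a by (simp add: an_constants_def add_pos_nonneg)
  ultimately show ?thesis
    by (auto simp: an_constants_def)
qed

lemma an_le_an:
  assumes n: "0 < n" "0 < N" and ne: "an_constants n FF \<noteq> {}"
  shows "an N FF \<le> (1 + n / N) * an n FF"
proof -
  let ?c = "1 + real n / real N"
  have c: "0 < ?c"
    by (simp add: add_pos_nonneg)
  have "an N FF / ?c \<le> a" if "a \<in> an_constants n FF" for a
  proof -
    have "an N FF \<le> ?c * a"
      unfolding an_eq_Inf_an_constants
      by (intro cInf_lower an_constants_tile[OF n that] bdd_below_an_constants)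
    with c show ?thesis
      by (simp add: divide_le_eq mult.commute)
  qed
  then have "an N FF / ?c \<le> an n FF"
    unfolding an_eq_Inf_an_constants[of n] using ne by (intro cInf_greatest) auto
  with c show ?thesis
    by (simp add: divide_le_eq mult.commute)
qed

lemma LIMSEQ_INF_if_le_one_plus_div:
  fixes s :: "nat \<Rightarrow> real"
  assumes nonneg: "\<And>n. 1 \<le> n \<Longrightarrow> 0 \<le> s n"
    and le: "\<And>n N. 1 \<le> n \<Longrightarrow> 1 \<le> N \<Longrightarrow> s N \<le> (1 + n / N) * s n"
  shows "s \<longlonglongrightarrow> (INF n\<in>{1..}. s n)"
proof -
  have bdd: "bdd_below (s ` {1..})"
    using nonneg by (intro bdd_belowI2[of "{1..}" 0]) auto
  show ?thesis
  proof (rule order_tendstoI)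
    fix a
    assume a: "a < (INF n\<in>{1..}. s n)"
    show "eventually (\<lambda>N. a < s N) sequentially"
      using eventually_ge_at_top[of 1]
      by eventually_elim (use a bdd in \<open>auto intro: order.strict_trans2 cINF_lower\<close>)
  next
    fix a
    assume "(INF n\<in>{1..}. s n) < a"
    then obtain n where n: "1 \<le> n" "s n < a"
      using cINF_less_iff[OF _ bdd] by auto
    have "(\<lambda>N. (1 + n / N) * s n) \<longlonglongrightarrow> (1 + 0) * s n"
      by (intro tendsto_intros lim_const_over_n)
    with n(2) have "eventually (\<lambda>N. (1 + n / N) * s n < a) sequentially"
      by (auto dest: order_tendstoD(2))
    then show "eventually (\<lambda>N. s N < a) sequentially"
      using eventually_ge_at_top[of 1]
      by eventually_elim (use le n(1) in \<open>auto intro: order.strict_trans1\<close>)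
  qed
qed

theorem proposition5p2:
  fixes FF :: "('a metric \<times> 'b metric \<times> ('a \<Rightarrow> 'b)) set"
  assumes maps: "\<forall>(X, Y, F) \<in> FF. F ` mspace X \<subseteq> mspace Y"
    and unif_lip: "\<exists>L::real. \<forall>(X, Y, F) \<in> FF. lip (mspace X) (mdist X) (mdist Y) F \<le> ereal L"
  shows "convergent (\<lambda>n. an n FF) \<and> (\<lambda>n. an n FF) \<longlonglongrightarrow> (INF n\<in>{1..}. an n FF)"
proof -
  obtain L where L: "\<forall>(X, Y, F) \<in> FF. lip (mspace X) (mdist X) (mdist Y) F \<le> ereal L"
    using unif_lip by blast
  have "max L 1 \<in> an_constants n FF" if "1 \<le> n" for n
    by (rule an_constants_if_lip_le[OF _ _ _ maps L]) (use that in auto)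
  then have ne: "an_constants n FF \<noteq> {}" if "1 \<le> n" for n
    using that by blast
  have "(\<lambda>n. an n FF) \<longlonglongrightarrow> (INF n\<in>{1..}. an n FF)"
    using ne by (intro LIMSEQ_INF_if_le_one_plus_div an_nonneg an_le_an) auto
  then show ?thesis
    by (auto intro: convergentI)
qed

end
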